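(* Let $\mathcal{B}\subseteq\mathcal{P}(X)$ be an admissible algebra containing $\mathcal{A}_0$. Let $\{\nu_k\}_{k\in\omega}$ be a sequence of (finitely additive) probability measures on $\mathcal{P}(X)$ such that (i) each $\nu_k$ is supported by a finite subset of $X$, and (ii) $\lim_k\nu_k(B)=\mu(B)$ for every $B\in\mathcal{B}$. Let $B_0\in\mathcal{B}$ be such that $\mu(B_0)>0$. Then there is $A\subseteq B_0$ such that the algebra generated by $\mathcal{B}\cup\{A\}$ is admissible and $\{\nu_k(A)\}_{k\in\omega}$ does not converge to $\mu(A)$.
   Context: $\omega=\{0,1,2,\dots\}$, $2^\omega$ is the Cantor set, $\lambda$ is the usual product probability measure on $2^\omega$, and $\mathrm{Clop}(2^\omega)$ is the algebra of clopen subsets of $2^\omega$. Let $X=\omega\times 2^\omega$. For $B\subseteq X$ and $n\in\omega$, $B_{|n}=\{t\in 2^\omega:(n,t)\in B\}$. A set $B\subseteq X$ is admissible if $B_{|n}\in\mathrm{Clop}(2^\omega)$ for all $n\in\omega$ and $\lim_n\lambda(B_{|n})$ exists; in that case $\mu(B):=\lim_n\lambda(B_{|n})$. An algebra of subsets of $X$ is admissible if all its elements are admissible. $\mathcal{A}_0$ is the algebra of subsets of $X$ generated by all products $A\times C$ with $A\subseteq\omega$ finite or cofinite and $C\in\mathrm{Clop}(2^\omega)$. *)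

theory Defs
  imports "HOL-Analysis.Analysis" "HOL-Probability.Probability"
begin

type_synonym cantor = "nat \<Rightarrow> bool"
type_synonym X = "nat \<times> cantor"

definition Clop :: "cantor set set" where
  "Clop = {C. open C \<and> closed C}"

definition cantor_measure :: "cantor measure" where
  "cantor_measure = (\<Pi>\<^sub>M i\<in>(UNIV::nat set). measure_pmf (bernoulli_pmf (1/2)))"

definition lam :: "cantor set \<Rightarrow> real" where
  "lam C = measure cantor_measure C"

definition section_at :: "X set \<Rightarrow> nat \<Rightarrow> cantor set" where
  "section_at B n = {t. (n, t) \<in> B}"

definition admissible :: "X set \<Rightarrow> bool" where
  "admissible B \<longleftrightarrow> (\<forall>n. section_at B n \<in> Clop) \<and> convergent (\<lambda>n. lam (section_at B n))"

definition mu :: "X set \<Rightarrow> real" where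
  "mu B = lim (\<lambda>n. lam (section_at B n))"

definition admissible_algebra :: "X set set \<Rightarrow> bool" where
  "admissible_algebra \<B> \<longleftrightarrow> algebra UNIV \<B> \<and> (\<forall>B\<in>\<B>. admissible B)"

definition gen_algebra :: "X set set \<Rightarrow> X set set" where
  "gen_algebra S = \<Inter>{\<A>. algebra UNIV \<A> \<and> S \<subseteq> \<A>}"

definition A0 :: "X set set" where
  "A0 = gen_algebra {A \<times> C | A C. (finite A \<or> finite (- A)) \<and> C \<in> Clop}"

definition fa_prob :: "(X set \<Rightarrow> real) \<Rightarrow> bool" where
  "fa_prob \<nu> \<longleftrightarrow> (\<forall>A. \<nu> A \<ge> 0) \<and> \<nu> UNIV = 1 \<and>
     (\<forall>A B. A \<inter> B = {} \<longrightarrow> \<nu> (A \<union> B) = \<nu> A + \<nu> B)"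

definition finitely_supported :: "(X set \<Rightarrow> real) \<Rightarrow> bool" where
  "finitely_supported \<nu> \<longleftrightarrow> (\<exists>F. finite F \<and> \<nu> F = 1)"

end

theory Submission
  imports Defs
begin

text \<open>
  The columns \<open>{..<j} \<times> 2\<^sup>\<omega>\<close> lie in \<open>\<A>\<^sub>0\<close> and have \<open>\<mu>\<close>-measure 0, so a diagonal choice gives
  indices \<open>k\<^sub>j \<ge> j\<close> such that \<open>\<nu>\<^bsub>k\<^sub>j\<^esub>\<close> of the first \<open>j\<close> columns tends to 0. Let \<open>F\<^sub>j\<close> be a
  finite support of \<open>\<nu>\<^bsub>k\<^sub>j\<^esub>\<close>. In column \<open>n\<close> only the finitely many points of \<open>F\<^sub>0, \<dots>, F\<^sub>n\<close>
  matter, and they can be covered by a clopen set \<open>D\<^sub>n\<close> with \<open>\<lambda>(D\<^sub>n) \<le> 2\<^sup>-\<^sup>n\<close>. Removing all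
  \<open>(n, t)\<close> with \<open>t \<in> D\<^sub>n\<close> from \<open>B\<^sub>0\<close> gives \<open>A\<close>. Its sections differ from those of \<open>B\<^sub>0\<close> by sets
  of vanishing measure, so adjoining \<open>A\<close> keeps the algebra admissible and \<open>\<mu>(A) = \<mu>(B\<^sub>0) > 0\<close>;
  but \<open>A \<inter> F\<^sub>j\<close> lies in the first \<open>j\<close> columns, hence \<open>\<nu>\<^bsub>k\<^sub>j\<^esub>(A) \<rightarrow> 0\<close>.
\<close>

(* Needed for sets_PiM_equal_borel: the product sigma-algebra of the Cantor set is its Borel one. *)
instance bool :: second_countable_topology
proof
  show "\<exists>B::bool set set. countable B \<and> open = generate_topology B"
  proof (intro exI conjI)
    show "countable (UNIV :: bool set set)" by simp
    show "open = generate_topology (UNIV :: bool set set)"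
      by (intro ext iffI) (simp_all add: generate_topology.Basis discrete_topology_class.open_discrete)
  qed
qed

lemma space_cantor_measure [simp]: "space cantor_measure = UNIV"
  by (simp add: cantor_measure_def space_PiM)

lemma prob_space_cantor_measure: "prob_space cantor_measure"
  unfolding cantor_measure_def by (rule prob_space_PiM) (simp add: prob_space_measure_pmf)

lemma sets_cantor_measure: "sets cantor_measure = sets (borel :: cantor measure)"
proof -
  have sets_bool: "sets (borel :: bool measure) = UNIV"
    by (auto simp: discrete_topology_class.open_discrete)
  have "sets cantor_measure = sets (Pi\<^sub>M (UNIV::nat set) (\<lambda>_. borel :: bool measure))"
    unfolding cantor_measure_def by (rule sets_PiM_cong) (simp_all add: sets_bool)
  also have "\<dots> = sets borel"
    by (rule sets_PiM_equal_borel)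
  finally show ?thesis .
qed

lemma Clop_sets_cantor_measure: "C \<in> Clop \<Longrightarrow> C \<in> sets cantor_measure"
  unfolding sets_cantor_measure Clop_def by auto

lemma Clop_Int: "A \<in> Clop \<Longrightarrow> B \<in> Clop \<Longrightarrow> A \<inter> B \<in> Clop"
  and Clop_Un: "A \<in> Clop \<Longrightarrow> B \<in> Clop \<Longrightarrow> A \<union> B \<in> Clop"
  and Clop_Diff: "A \<in> Clop \<Longrightarrow> B \<in> Clop \<Longrightarrow> A - B \<in> Clop"
  by (auto simp: Clop_def open_Diff closed_Diff)

lemma Clop_UN: "finite I \<Longrightarrow> (\<And>i. i \<in> I \<Longrightarrow> C i \<in> Clop) \<Longrightarrow> (\<Union>i\<in>I. C i) \<in> Clop"
  by (auto simp: Clop_def intro!: open_UN closed_UN)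

definition cylinder :: "cantor \<Rightarrow> nat \<Rightarrow> cantor set" where
  "cylinder p m = {t. \<forall>i<m. t i = p i}"

lemma cylinder_Clop: "cylinder p m \<in> Clop"
proof -
  have "cylinder p m = (\<Inter>i\<in>{..<m}. (\<lambda>t. t i) -` {p i})"
    by (auto simp: cylinder_def)
  moreover have "open ((\<lambda>t::cantor. t i) -` {p i})" "closed ((\<lambda>t::cantor. t i) -` {p i})" for i
    by (auto intro!: open_vimage closed_vimage simp: closed_def discrete_topology_class.open_discrete)
  ultimately show ?thesis
    unfolding Clop_def by (auto intro!: open_INT closed_INT)
qed

lemma lam_cylinder: "lam (cylinder p m) = (1/2) ^ m"
proof -
  interpret product_prob_space "\<lambda>_::nat. measure_pmf (bernoulli_pmf (1/2))" UNIV
    by unfold_locales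
  have "emeasure cantor_measure (cylinder p m)
      = (\<Prod>i\<in>{..<m}. emeasure (measure_pmf (bernoulli_pmf (1/2))) {p i})"
    using emeasure_PiM_Collect[of "{..<m}" "\<lambda>i. {p i}"]
    by (simp add: cantor_measure_def cylinder_def space_PiM Ball_def)
  also have "\<dots> = (\<Prod>i\<in>{..<m}. ennreal (1/2))"
    by (rule prod.cong[OF refl]) (cases "p i"; simp add: emeasure_pmf_single)
  also have "\<dots> = ennreal ((1/2) ^ m)"
    by (subst prod_ennreal) auto
  finally show ?thesis
    by (simp add: lam_def measure_def)
qed

lemma finite_subset_small_Clop:
  assumes "finite P"
  obtains D where "D \<in> Clop" "P \<subseteq> D" "lam D \<le> (1/2) ^ n"
proof
  interpret prob_space cantor_measure by (rule prob_space_cantor_measure)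
  let ?m = "card P + n"
  show "(\<Union>p\<in>P. cylinder p ?m) \<in> Clop"
    using assms by (intro Clop_UN cylinder_Clop)
  show "P \<subseteq> (\<Union>p\<in>P. cylinder p ?m)"
    by (auto simp: cylinder_def)
  have "lam (\<Union>p\<in>P. cylinder p ?m) \<le> (\<Sum>p\<in>P. lam (cylinder p ?m))"
    unfolding lam_def using assms Clop_sets_cantor_measure[OF cylinder_Clop]
    by (intro finite_measure_subadditive_finite) auto
  also have "\<dots> = real (card P) * (1/2) ^ card P * (1/2) ^ n"
    by (simp add: lam_cylinder power_add)
  also have "\<dots> \<le> (1/2) ^ n"
  proof -
    have "real (card P) \<le> 2 ^ card P"
      using less_exp[of "card P"] by (metis less_imp_le of_nat_le_iff of_nat_numeral of_nat_power)
    then have "real (card P) * (1/2) ^ card P \<le> 1"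
      by (simp add: power_one_over field_simps)
    then show ?thesis
      by (simp add: mult_left_le_one_le)
  qed
  finally show "lam (\<Union>p\<in>P. cylinder p ?m) \<le> (1/2) ^ n" .
qed

lemma lam_nonneg [simp]: "0 \<le> lam C"
  by (simp add: lam_def)

lemma lam_diff_le:
  assumes "X \<in> Clop" "Y \<in> Clop" "D \<in> Clop" "X - Y \<subseteq> D" "Y - X \<subseteq> D"
  shows "\<bar>lam X - lam Y\<bar> \<le> lam D"
proof -
  interpret prob_space cantor_measure by (rule prob_space_cantor_measure)
  have "lam U \<le> lam V + lam D" if "U \<in> Clop" "V \<in> Clop" "U - V \<subseteq> D" for U V
  proof -
    have "lam U \<le> lam (V \<union> D)"
      unfolding lam_def using that assms(3) Clop_sets_cantor_measure
      by (intro finite_measure_mono) auto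
    also have "\<dots> \<le> lam V + lam D"
      unfolding lam_def using that assms(3) Clop_sets_cantor_measure
      by (intro measure_Un_le) auto
    finally show ?thesis .
  qed
  from this[of X Y] this[of Y X] assms show ?thesis
    by linarith
qed

lemma section_at_Int [simp]: "section_at (A \<inter> B) n = section_at A n \<inter> section_at B n"
  and section_at_Un [simp]: "section_at (A \<union> B) n = section_at A n \<union> section_at B n"
  and section_at_Diff [simp]: "section_at (A - B) n = section_at A n - section_at B n"
  by (auto simp: section_at_def)

lemma admissible_close:
  assumes T: "admissible T" and S: "\<And>n. section_at S n \<in> Clop"
    and D: "\<And>n. D n \<in> Clop" "(\<lambda>n. lam (D n)) \<longlonglongrightarrow> 0"
    and close: "\<And>n. section_at S n - section_at T n \<subseteq> D n"
      "\<And>n. section_at T n - section_at S n \<subseteq> D n"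
  shows "admissible S" and "mu S = mu T"
proof -
  have T_Clop: "section_at T n \<in> Clop" for n
    using T by (simp add: admissible_def)
  have lim_T: "(\<lambda>n. lam (section_at T n)) \<longlonglongrightarrow> mu T"
    using T by (simp add: admissible_def mu_def convergent_LIMSEQ_iff)
  have "(\<lambda>n. lam (section_at S n) - lam (section_at T n)) \<longlonglongrightarrow> 0"
    by (rule Lim_null_comparison[OF _ D(2)])
      (auto intro!: always_eventually lam_diff_le S T_Clop D close)
  from tendsto_add[OF lim_T this] have lim_S: "(\<lambda>n. lam (section_at S n)) \<longlonglongrightarrow> mu T"
    by simp
  then show "admissible S"
    using S by (auto simp: admissible_def convergent_def)
  show "mu S = mu T"
    using limI[OF lim_S] by (simp add: mu_def)
qed

lemma algebra_gen_algebra: "algebra UNIV (gen_algebra S)"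
  unfolding gen_algebra_def algebra_iff_Un by auto

lemma gen_algebra_least: "algebra UNIV E \<Longrightarrow> S \<subseteq> E \<Longrightarrow> gen_algebra S \<subseteq> E"
  unfolding gen_algebra_def by auto

lemma gen_algebra_insert_subset:
  assumes "algebra UNIV \<B>"
  shows "gen_algebra (insert A \<B>) \<subseteq> {(B1 \<inter> A) \<union> (B2 - A) | B1 B2. B1 \<in> \<B> \<and> B2 \<in> \<B>}"
    (is "_ \<subseteq> ?E")
proof (rule gen_algebra_least)
  interpret algebra UNIV \<B> by (fact assms)
  show "algebra UNIV ?E"
    unfolding algebra_iff_Un
  proof (intro conjI ballI)
    show "{} \<in> ?E"
      by (intro CollectI exI[of _ "{}"]) auto
    fix a b assume "a \<in> ?E" "b \<in> ?E"
    then obtain B1 B2 C1 C2 where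
      a: "a = (B1 \<inter> A) \<union> (B2 - A)" "B1 \<in> \<B>" "B2 \<in> \<B>" and
      b: "b = (C1 \<inter> A) \<union> (C2 - A)" "C1 \<in> \<B>" "C2 \<in> \<B>"
      by blast
    show "UNIV - a \<in> ?E"
      by (intro CollectI exI[of _ "UNIV - B1"] exI[of _ "UNIV - B2"]) (auto simp: a)
    show "a \<union> b \<in> ?E"
      by (intro CollectI exI[of _ "B1 \<union> C1"] exI[of _ "B2 \<union> C2"]) (auto simp: a b)
  qed simp
  have "A \<in> ?E"
    by (intro CollectI exI[of _ UNIV] exI[of _ "{}"]) auto
  moreover have "B \<in> ?E" if "B \<in> \<B>" for B
    using that by (intro CollectI exI[of _ B] exI[of _ B]) auto
  ultimately show "insert A \<B> \<subseteq> ?E"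
    by blast
qed

lemma admissible_algebra_insert_close:
  assumes alg: "admissible_algebra \<B>" and B0: "B0 \<in> \<B>"
    and A: "\<And>n. section_at A n \<in> Clop"
    and D: "\<And>n. D n \<in> Clop" "(\<lambda>n. lam (D n)) \<longlonglongrightarrow> 0"
    and close: "\<And>n. section_at A n - section_at B0 n \<subseteq> D n"
      "\<And>n. section_at B0 n - section_at A n \<subseteq> D n"
  shows "admissible_algebra (gen_algebra (insert A \<B>))"
proof -
  interpret algebra UNIV \<B>
    using alg by (simp add: admissible_algebra_def)
  have adm: "admissible B" if "B \<in> \<B>" for B
    using alg that by (simp add: admissible_algebra_def)
  have "admissible ((B1 \<inter> A) \<union> (B2 - A))" if "B1 \<in> \<B>" "B2 \<in> \<B>" for B1 B2
  proof (rule admissible_close[OF _ _ D])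
    show "admissible ((B1 \<inter> B0) \<union> (B2 - B0))"
      using that B0 by (intro adm) auto
    show "section_at ((B1 \<inter> A) \<union> (B2 - A)) n \<in> Clop" for n
      using that adm A by (auto simp: admissible_def intro!: Clop_Un Clop_Int Clop_Diff)
  qed (use close in fastforce)+
  then show ?thesis
    using gen_algebra_insert_subset[OF algebra_axioms, of A] algebra_gen_algebra
    by (auto simp: admissible_algebra_def)
qed

definition remove_sections :: "X set \<Rightarrow> (nat \<Rightarrow> cantor set) \<Rightarrow> X set" where
  "remove_sections B D = {x \<in> B. snd x \<notin> D (fst x)}"

lemma section_at_remove_sections [simp]:
  "section_at (remove_sections B D) n = section_at B n - D n"
  by (auto simp: remove_sections_def section_at_def)

lemma admissible_algebra_insert_remove_sections:
  assumes alg: "admissible_algebra \<B>" and B0: "B0 \<in> \<B>"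
    and D: "\<And>n. D n \<in> Clop" "(\<lambda>n. lam (D n)) \<longlonglongrightarrow> 0"
  shows "admissible_algebra (gen_algebra (insert (remove_sections B0 D) \<B>))"
    and "mu (remove_sections B0 D) = mu B0"
proof -
  have B0_adm: "admissible B0"
    using alg B0 by (simp add: admissible_algebra_def)
  then have Clop: "section_at (remove_sections B0 D) n \<in> Clop" for n
    by (simp add: admissible_def Clop_Diff D(1))
  show "admissible_algebra (gen_algebra (insert (remove_sections B0 D) \<B>))"
    by (rule admissible_algebra_insert_close[OF alg B0 Clop D]) auto
  show "mu (remove_sections B0 D) = mu B0"
    by (rule admissible_close(2)[OF B0_adm Clop D]) auto
qed

lemma fa_prob_mono: "fa_prob \<nu> \<Longrightarrow> A \<subseteq> B \<Longrightarrow> \<nu> A \<le> \<nu> B"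
  unfolding fa_prob_def by (metis Diff_disjoint Diff_partition add_increasing2 order_refl)

lemma fa_prob_Int_support:
  assumes "fa_prob \<nu>" "\<nu> F = 1"
  shows "\<nu> (A \<inter> F) = \<nu> A"
proof -
  have add: "\<nu> (U \<union> V) = \<nu> U + \<nu> V" if "U \<inter> V = {}" for U V
    using assms(1) that by (simp add: fa_prob_def)
  have "\<nu> (- F) = 0"
    using add[of F "- F"] assms by (simp add: fa_prob_def)
  moreover have "0 \<le> \<nu> (A - F)" "\<nu> (A - F) \<le> \<nu> (- F)"
    using assms(1) by (auto simp: fa_prob_def intro: fa_prob_mono)
  moreover have "\<nu> A = \<nu> (A \<inter> F) + \<nu> (A - F)"
    using add[of "A \<inter> F" "A - F"] by (metis Int_Diff_Un Int_Diff_disjoint)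
  ultimately show ?thesis
    by linarith
qed

definition columns :: "nat \<Rightarrow> X set" where
  "columns j = {..<j} \<times> UNIV"

lemma columns_in_A0: "columns j \<in> A0"
proof -
  have "UNIV \<in> Clop"
    by (simp add: Clop_def)
  then show ?thesis
    unfolding A0_def gen_algebra_def columns_def by blast
qed

lemma mu_columns: "mu (columns j) = 0"
proof -
  have "\<forall>\<^sub>F n in sequentially. lam (section_at (columns j) n) = 0"
    using eventually_ge_at_top[of j]
    by eventually_elim (simp add: columns_def section_at_def lam_def)
  then show ?thesis
    unfolding mu_def by (intro limI tendsto_eventually)
qed

lemma diagonal_tendsto_zero:
  fixes f :: "nat \<Rightarrow> nat \<Rightarrow> real"
  assumes "\<And>j. (\<lambda>k. f k j) \<longlonglongrightarrow> 0"
  obtains kk where "\<And>j. j \<le> kk j" "(\<lambda>j. f (kk j) j) \<longlonglongrightarrow> 0"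
proof -
  have "\<exists>k\<ge>j. \<bar>f k j\<bar> < inverse (real (Suc j))" for j
  proof -
    have "0 < inverse (real (Suc j))"
      by simp
    from eventually_ge_at_top[of j] tendstoD[OF assms[of j] this]
    have "\<forall>\<^sub>F k in sequentially. j \<le> k \<and> \<bar>f k j\<bar> < inverse (real (Suc j))"
      by eventually_elim (auto simp: dist_real_def)
    then show ?thesis
      by (auto simp: eventually_sequentially)
  qed
  then obtain kk where kk: "\<And>j. j \<le> kk j" "\<And>j. \<bar>f (kk j) j\<bar> < inverse (real (Suc j))"
    by metis
  have "(\<lambda>j. f (kk j) j) \<longlonglongrightarrow> 0"
    using order.strict_implies_order[OF kk(2)]
    by (intro Lim_null_comparison[OF _ LIMSEQ_inverse_real_of_nat]) (auto intro: always_eventually)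
  with kk(1) show ?thesis
    by (rule that)
qed

lemma Clop_null_cover_of_tails:
  assumes "\<And>j. finite (F j)"
  obtains D where "\<And>n. D n \<in> Clop" "(\<lambda>n. lam (D n)) \<longlonglongrightarrow> 0"
    "\<And>j n t. (n, t) \<in> F j \<Longrightarrow> j \<le> n \<Longrightarrow> t \<in> D n"
proof -
  define P where "P n = (\<Union>j\<in>{..n}. Pair n -` F j)" for n
  have "finite (P n)" for n
    unfolding P_def using assms by (intro finite_UN_I finite_vimageI) (auto simp: inj_on_def)
  then have "\<exists>D. D \<in> Clop \<and> P n \<subseteq> D \<and> lam D \<le> (1/2) ^ n" for n
    by (metis finite_subset_small_Clop)
  then obtain D where D: "\<And>n. D n \<in> Clop" "\<And>n. P n \<subseteq> D n" "\<And>n. lam (D n) \<le> (1/2) ^ n"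
    by metis
  have "(\<lambda>n. lam (D n)) \<longlonglongrightarrow> 0"
    by (rule Lim_null_comparison[OF _ LIMSEQ_power_zero[of "1/2::real"]])
      (auto intro!: always_eventually D(3))
  moreover have "t \<in> D n" if "(n, t) \<in> F j" "j \<le> n" for j n t
    using that D(2)[of n] by (auto simp: P_def)
  ultimately show ?thesis
    using D(1) that by blast
qed

lemma not_LIMSEQ_if_subseq_le_null:
  fixes a b :: "nat \<Rightarrow> real"
  assumes "\<And>j. j \<le> kk j" "b \<longlonglongrightarrow> 0" "\<And>j. a (kk j) \<le> b j" "0 < l"
  shows "\<not> a \<longlonglongrightarrow> l"
proof
  assume "a \<longlonglongrightarrow> l"
  moreover have "filterlim kk sequentially sequentially"
    by (rule filterlim_at_top_mono[OF filterlim_ident]) (auto intro!: always_eventually assms(1))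
  ultimately have "(\<lambda>j. a (kk j)) \<longlonglongrightarrow> l"
    by (rule filterlim_compose)
  then have "l \<le> 0"
    using LIMSEQ_le assms(2,3) by blast
  with assms(4) show False
    by simp
qed

theorem lemma2p6:
  fixes \<B> :: "X set set" and \<nu> :: "nat \<Rightarrow> X set \<Rightarrow> real" and B0 :: "X set"
  assumes "admissible_algebra \<B>"
    and "A0 \<subseteq> \<B>"
    and "\<forall>k. fa_prob (\<nu> k)"
    and "\<forall>k. finitely_supported (\<nu> k)"
    and "\<forall>B\<in>\<B>. (\<lambda>k. \<nu> k B) \<longlonglongrightarrow> mu B"
    and "B0 \<in> \<B>"
    and "mu B0 > 0"
  shows "\<exists>A. A \<subseteq> B0 \<and> admissible_algebra (gen_algebra (insert A \<B>))
             \<and> \<not> ((\<lambda>k. \<nu> k A) \<longlonglongrightarrow> mu A)"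
proof -
  have "(\<lambda>k. \<nu> k (columns j)) \<longlonglongrightarrow> 0" for j
    using assms(2,5) columns_in_A0 mu_columns by (metis subsetD)
  then obtain kk where kk: "\<And>j. j \<le> kk j" "(\<lambda>j. \<nu> (kk j) (columns j)) \<longlonglongrightarrow> 0"
    using diagonal_tendsto_zero[of "\<lambda>k j. \<nu> k (columns j)"] by blast
  have "\<exists>F. finite F \<and> \<nu> (kk j) F = 1" for j
    using assms(4) by (simp add: finitely_supported_def)
  then obtain F where F: "\<And>j. finite (F j)" "\<And>j. \<nu> (kk j) (F j) = 1"
    by metis
  obtain D where D: "\<And>n. D n \<in> Clop" "(\<lambda>n. lam (D n)) \<longlonglongrightarrow> 0"
    and cover: "\<And>j n t. (n, t) \<in> F j \<Longrightarrow> j \<le> n \<Longrightarrow> t \<in> D n"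
    using Clop_null_cover_of_tails[of F, OF F(1)] by blast
  define A where "A = remove_sections B0 D"
  have le_columns: "\<nu> (kk j) A \<le> \<nu> (kk j) (columns j)" for j
  proof -
    have "A \<inter> F j \<subseteq> columns j"
      by (auto simp: A_def remove_sections_def columns_def) (meson cover not_le)
    with assms(3) have "\<nu> (kk j) (A \<inter> F j) \<le> \<nu> (kk j) (columns j)"
      by (blast intro: fa_prob_mono)
    then show ?thesis
      using fa_prob_Int_support[of "\<nu> (kk j)" "F j"] assms(3) F(2) by simp
  qed
  have "\<not> (\<lambda>k. \<nu> k A) \<longlonglongrightarrow> mu A"
    using admissible_algebra_insert_remove_sections(2)[OF assms(1,6) D] assms(7)
    by (intro not_LIMSEQ_if_subseq_le_null[where a="\<lambda>k. \<nu> k A", OF kk le_columns]) (simp add: A_def)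
  moreover have "A \<subseteq> B0"
    by (auto simp: A_def remove_sections_def)
  ultimately show ?thesis
    using admissible_algebra_insert_remove_sections(1)[OF assms(1,6) D] A_def by blast
qed

end
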